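(* A locally connected Hausdorff space $X$ has a Hausdorff one-point connectification if and only if $X$ has no almost compact component.
   Context: A one-point connectification of a space $X$ is a connected space $Y$ which contains $X$ as a dense subspace and such that $Y\setminus X$ is a singleton. A space $X$ is almost compact if for every open cover $\mathscr{U}$ of $X$ there is a finite subcollection $\mathscr{V}\subseteq\mathscr{U}$ with $X=\mathrm{cl}_X\bigcup\mathscr{V}$. *)

theory Defs
  imports "HOL-Analysis.Analysis"
begin

definition almost_compact_space :: "'a topology \<Rightarrow> bool" where
  "almost_compact_space X \<longleftrightarrow>
     (\<forall>\<U>. (\<forall>U\<in>\<U>. openin X U) \<and> topspace X \<subseteq> \<Union>\<U> \<longrightarrow>
        (\<exists>\<V>. finite \<V> \<and> \<V> \<subseteq> \<U> \<and> X closure_of (\<Union>\<V>) = topspace X))"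

definition one_point_connectification :: "'a topology \<Rightarrow> 'b topology \<Rightarrow> ('a \<Rightarrow> 'b) \<Rightarrow> bool" where
  "one_point_connectification X Y f \<longleftrightarrow>
     connected_space Y \<and> embedding_map X Y f \<and>
     Y closure_of (f ` topspace X) = topspace Y \<and>
     (\<exists>p. topspace Y - f ` topspace X = {p})"

text \<open>Existence of a Hausdorff one-point connectification. The new space is
realised on the type 'a option (any one-point extension can be transported there).\<close>
definition has_Hausdorff_one_point_connectification :: "'a topology \<Rightarrow> bool" where
  "has_Hausdorff_one_point_connectification X \<longleftrightarrow>
     (\<exists>(Y::'a option topology) f. one_point_connectification X Y f \<and> Hausdorff_space Y)"

end

theory Submission
  imports Defs
begin

(*
  Necessity: a component C of a locally connected space is clopen, so its image in a
  one-point connectification Y is open in Y and closed in Y minus the new point p. In a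
  Hausdorff space an open almost compact set S can be separated from a point outside it:
  finitely many of the neighbourhoods separating points of S from p already have a union
  dense in S. Hence p is not in the closure of the image of C, the image is clopen in the
  connected space Y, and so it is empty.

  Sufficiency: on every component pick an open cover no finite subfamily of which has a
  closure containing the component. Adjoin a point whose neighbourhoods are the sets
  containing the complement of the closure of a finite union of members of these covers.
  Every such neighbourhood meets every component. A nonempty clopen set missing the new
  point contains a whole component, while its complement is a neighbourhood of the new
  point, so it cannot exist and the extension is connected. A cover member U and the
  neighbourhood determined by U alone separate the new point from the points of U.
*)

lemma almost_compact_spaceD:
  assumes "almost_compact_space X" "\<And>U. U \<in> \<U> \<Longrightarrow> openin X U" "topspace X \<subseteq> \<Union>\<U>"
  obtains \<V> where "finite \<V>" "\<V> \<subseteq> \<U>" "X closure_of \<Union>\<V> = topspace X"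
  using assms(1)[unfolded almost_compact_space_def, rule_format, of \<U>] assms(2,3) by blast

lemma almost_compact_space_continuous_image:
  assumes f: "continuous_map X Y f" and surj: "f ` topspace X = topspace Y"
    and X: "almost_compact_space X"
  shows "almost_compact_space Y"
  unfolding almost_compact_space_def
proof (intro allI impI, elim conjE)
  fix \<U> assume \<U>_open: "\<forall>U\<in>\<U>. openin Y U" and \<U>_cover: "topspace Y \<subseteq> \<Union>\<U>"
  define pre where "pre U = {x \<in> topspace X. f x \<in> U}" for U
  have pre_open: "openin X P" if "P \<in> pre ` \<U>" for P
    using that \<U>_open openin_continuous_map_preimage[OF f] unfolding pre_def by blast
  have pre_cover: "topspace X \<subseteq> \<Union>(pre ` \<U>)"
  proof
    fix x assume x: "x \<in> topspace X"
    then have "f x \<in> topspace Y"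
      using surj by blast
    then obtain U where "U \<in> \<U>" "f x \<in> U"
      using \<U>_cover by blast
    with x show "x \<in> \<Union>(pre ` \<U>)"
      unfolding pre_def by blast
  qed
  obtain \<W> where \<W>: "finite \<W>" "\<W> \<subseteq> pre ` \<U>" "X closure_of \<Union>\<W> = topspace X"
    by (rule almost_compact_spaceD[OF X pre_open pre_cover])
  obtain \<V> where \<V>: "\<V> \<subseteq> \<U>" "finite \<V>" "\<W> = pre ` \<V>"
    using finite_subset_image[OF \<W>(1,2)] by blast
  have "topspace Y = f ` (X closure_of \<Union>\<W>)"
    by (simp only: \<W>(3) surj)
  also have "\<dots> \<subseteq> Y closure_of (f ` \<Union>\<W>)"
    by (rule continuous_map_image_closure_subset[OF f])
  also have "\<dots> \<subseteq> Y closure_of \<Union>\<V>"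
    by (rule closure_of_mono) (auto simp: \<V>(3) pre_def)
  finally have "Y closure_of \<Union>\<V> = topspace Y"
    by (rule subset_antisym[OF closure_of_subset_topspace])
  with \<V>(1,2) show "\<exists>\<V>. finite \<V> \<and> \<V> \<subseteq> \<U> \<and> Y closure_of \<Union>\<V> = topspace Y"
    by blast
qed

lemma almost_compact_open_subset_not_in_closure_of:
  assumes Y: "Hausdorff_space Y" and S: "openin Y S" "almost_compact_space (subtopology Y S)"
    and p: "p \<in> topspace Y" "p \<notin> S"
  shows "p \<notin> Y closure_of S"
proof -
  have SY: "S \<subseteq> topspace Y"
    using S(1) openin_subset by blast
  have "\<exists>U V. openin Y U \<and> openin Y V \<and> x \<in> U \<and> p \<in> V \<and> disjnt U V" if "x \<in> S" for x
    using Y[unfolded Hausdorff_space_def, rule_format, of x p] p SY that by blast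
  then obtain U V where UV: "\<And>x. x \<in> S \<Longrightarrow>
      openin Y (U x) \<and> openin Y (V x) \<and> x \<in> U x \<and> p \<in> V x \<and> disjnt (U x) (V x)"
    by metis
  have cover_open: "openin (subtopology Y S) W" if "W \<in> (\<lambda>x. S \<inter> U x) ` S" for W
    using that UV openin_subtopology_Int2 by blast
  have cover: "topspace (subtopology Y S) \<subseteq> \<Union>((\<lambda>x. S \<inter> U x) ` S)"
    using UV by fastforce
  obtain \<V> where \<V>: "finite \<V>" "\<V> \<subseteq> (\<lambda>x. S \<inter> U x) ` S"
    and dense: "subtopology Y S closure_of \<Union>\<V> = topspace (subtopology Y S)"
    by (rule almost_compact_spaceD[OF S(2) cover_open cover])
  obtain F where F: "F \<subseteq> S" "finite F" "\<V> = (\<lambda>x. S \<inter> U x) ` F"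
    using finite_subset_image[OF \<V>] by blast
  define W where "W = topspace Y \<inter> \<Inter>(V ` F)"
  have "openin Y W"
    unfolding W_def using F UV by (intro openin_Int_Inter) auto
  moreover have "p \<in> W"
    unfolding W_def using F UV p by blast
  ultimately have W: "openin Y W" "p \<in> W" .
  have "W \<inter> U x = {}" if "x \<in> F" for x
    using that F(1) UV[of x] unfolding W_def disjnt_def by blast
  then have "W \<inter> \<Union>\<V> = {}"
    unfolding F(3) by blast
  then have "W \<inter> Y closure_of \<Union>\<V> = {}"
    by (simp add: openin_Int_closure_of_eq_empty[OF W(1)])
  moreover have "S \<subseteq> Y closure_of \<Union>\<V>"
    using dense closure_of_subtopology_open[of Y S "\<Union>\<V>"] S(1) SY by auto
  ultimately have "W \<inter> S = {}"
    by blast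
  then have "W \<inter> Y closure_of S = {}"
    by (simp add: openin_Int_closure_of_eq_empty[OF W(1)])
  with W(2) show ?thesis
    by blast
qed

lemma almost_compact_clopen_in_punctured_space_empty:
  assumes Y: "connected_space Y" "Hausdorff_space Y" and p: "p \<in> topspace Y" "p \<notin> S"
    and S: "openin Y S" "closedin (subtopology Y (topspace Y - {p})) S"
      "almost_compact_space (subtopology Y S)"
  shows "S = {}"
proof -
  obtain K where K: "closedin Y K" "S = K \<inter> (topspace Y - {p})"
    using S(2) unfolding closedin_subtopology by blast
  have "Y closure_of S \<subseteq> K"
    using K by (simp add: closure_of_minimal)
  moreover have "p \<notin> Y closure_of S"
    by (rule almost_compact_open_subset_not_in_closure_of[OF Y(2) S(1,3) p])
  ultimately have "Y closure_of S \<subseteq> S"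
    using K(2) closure_of_subset_topspace by fastforce
  then have "closedin Y S"
    using closure_of_subset[OF openin_subset[OF S(1)]] closure_of_eq by blast
  then have "S = {} \<or> S = topspace Y"
    using Y(1) S(1) connected_space_clopen_in by blast
  with p show ?thesis
    by blast
qed

lemma one_point_connectification_component_not_almost_compact:
  assumes X: "locally_connected_space X" and f: "one_point_connectification X Y f"
    and Y: "Hausdorff_space Y" and C: "C \<in> connected_components_of X"
  shows "\<not> almost_compact_space (subtopology X C)"
proof
  assume C_ac: "almost_compact_space (subtopology X C)"
  obtain p where p: "topspace Y - f ` topspace X = {p}"
    using f unfolding one_point_connectification_def by blast
  have Y_conn: "connected_space Y" and emb: "embedding_map X Y f"
    using f unfolding one_point_connectification_def by blast+
  have hom: "homeomorphic_map X (subtopology Y (f ` topspace X)) f"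
    using emb by (simp add: embedding_map_def)
  have cont: "continuous_map X Y f"
    using hom homeomorphic_imp_continuous_map continuous_map_in_subtopology by blast
  have punctured: "f ` topspace X = topspace Y - {p}"
    using p continuous_map_image_subset_topspace[OF cont] by blast
  have C_sub: "C \<subseteq> topspace X" and C_ne: "C \<noteq> {}"
    using connected_components_of_subset[OF C] nonempty_connected_components_of[OF C] by auto
  have "openin (subtopology Y (topspace Y - {p})) (f ` C)"
    using homeomorphic_map_openness[OF hom C_sub] punctured
      openin_connected_components_of_locally_connected_space[OF X C] by simp
  then have fC_open: "openin Y (f ` C)"
    using openin_trans_full closedin_Hausdorff_singleton[OF Y] p by (blast intro: openin_diff)
  have fC_closed: "closedin (subtopology Y (topspace Y - {p})) (f ` C)"
    using homeomorphic_map_closedness[OF hom C_sub] punctured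
      closedin_connected_components_of[OF C] by simp
  have "continuous_map (subtopology X C) (subtopology Y (f ` C)) f"
    using continuous_map_from_subtopology[OF cont] by (auto simp: continuous_map_in_subtopology)
  moreover have "f ` topspace (subtopology X C) = topspace (subtopology Y (f ` C))"
    using C_sub continuous_map_image_subset_topspace[OF cont] by auto
  ultimately have "almost_compact_space (subtopology Y (f ` C))"
    using almost_compact_space_continuous_image C_ac by blast
  moreover have "p \<in> topspace Y" "p \<notin> f ` C"
    using p C_sub by auto
  ultimately have "f ` C = {}"
    using almost_compact_clopen_in_punctured_space_empty[OF Y_conn Y] fC_open fC_closed by blast
  with C_ne show False
    by blast
qed

definition one_point_extension :: "'a topology \<Rightarrow> 'a set set \<Rightarrow> 'a option topology" where
  "one_point_extension X \<U> = topology (\<lambda>U. openin X (Some -` U) \<and>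
     (None \<in> U \<longrightarrow> (\<exists>\<V>. finite \<V> \<and> \<V> \<subseteq> \<U> \<and> topspace X - X closure_of \<Union>\<V> \<subseteq> Some -` U)))"

lemma istopology_one_point_extension:
  "istopology (\<lambda>U. openin X (Some -` U) \<and>
     (None \<in> U \<longrightarrow> (\<exists>\<V>. finite \<V> \<and> \<V> \<subseteq> \<U> \<and> topspace X - X closure_of \<Union>\<V> \<subseteq> Some -` U)))"
proof -
  let ?N = "\<lambda>U. \<exists>\<V>. finite \<V> \<and> \<V> \<subseteq> \<U> \<and> topspace X - X closure_of \<Union>\<V> \<subseteq> Some -` U"
  have N_Int: "?N (S \<inter> T)" if N\<^sub>S: "?N S" and N\<^sub>T: "?N T" for S T
  proof -
    obtain \<V>\<^sub>S where S: "finite \<V>\<^sub>S" "\<V>\<^sub>S \<subseteq> \<U>" "topspace X - X closure_of \<Union>\<V>\<^sub>S \<subseteq> Some -` S"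
      using N\<^sub>S by blast
    obtain \<V>\<^sub>T where T: "finite \<V>\<^sub>T" "\<V>\<^sub>T \<subseteq> \<U>" "topspace X - X closure_of \<Union>\<V>\<^sub>T \<subseteq> Some -` T"
      using N\<^sub>T by blast
    have "X closure_of \<Union>(\<V>\<^sub>S \<union> \<V>\<^sub>T) = X closure_of \<Union>\<V>\<^sub>S \<union> X closure_of \<Union>\<V>\<^sub>T"
      by (simp add: closure_of_Un)
    then have "topspace X - X closure_of \<Union>(\<V>\<^sub>S \<union> \<V>\<^sub>T) \<subseteq> Some -` (S \<inter> T)"
      using S(3) T(3) by blast
    moreover have "finite (\<V>\<^sub>S \<union> \<V>\<^sub>T)" "\<V>\<^sub>S \<union> \<V>\<^sub>T \<subseteq> \<U>"
      using S T by auto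
    ultimately show ?thesis
      by blast
  qed
  have N_mono: "?N T" if N\<^sub>S: "?N S" and "S \<subseteq> T" for S T
  proof -
    obtain \<V> where \<V>: "finite \<V>" "\<V> \<subseteq> \<U>" "topspace X - X closure_of \<Union>\<V> \<subseteq> Some -` S"
      using N\<^sub>S by blast
    have "topspace X - X closure_of \<Union>\<V> \<subseteq> Some -` T"
      using \<V>(3) vimage_mono[OF \<open>S \<subseteq> T\<close>] by (rule order_trans)
    with \<V>(1,2) show ?thesis
      by blast
  qed
  let ?A = "\<lambda>U. openin X (Some -` U) \<and> (None \<in> U \<longrightarrow> ?N U)"
  have A_Int: "?A (S \<inter> T)" if "?A S" "?A T" for S T
    using that N_Int by (simp add: vimage_Int openin_Int)
  have A_Union: "?A (\<Union>K)" if K: "\<forall>S\<in>K. ?A S" for K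
  proof
    have "openin X (Some -` S)" if "S \<in> K" for S
      using bspec[OF K that] by (rule conjunct1)
    then show "openin X (Some -` \<Union>K)"
      unfolding vimage_Union by (intro openin_Union) (auto simp only: image_iff)
    show "None \<in> \<Union>K \<longrightarrow> ?N (\<Union>K)"
    proof
      assume "None \<in> \<Union>K"
      then obtain S where S: "S \<in> K" "None \<in> S"
        by blast
      from K S(1) have "?A S"
        by (rule bspec)
      with S(2) have "?N S"
        by simp
      then show "?N (\<Union>K)"
        by (rule N_mono[OF _ Union_upper[OF S(1)]])
    qed
  qed
  show "istopology ?A"
    unfolding istopology_def
  proof (rule conjI)
    show "\<forall>S T. ?A S \<longrightarrow> ?A T \<longrightarrow> ?A (S \<inter> T)"
      by (intro allI impI) (rule A_Int; assumption)
    show "\<forall>K. (\<forall>S\<in>K. ?A S) \<longrightarrow> ?A (\<Union>K)"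
      by (intro allI impI) (rule A_Union; assumption)
  qed
qed

lemma openin_one_point_extension:
  "openin (one_point_extension X \<U>) U \<longleftrightarrow> openin X (Some -` U) \<and>
     (None \<in> U \<longrightarrow> (\<exists>\<V>. finite \<V> \<and> \<V> \<subseteq> \<U> \<and> topspace X - X closure_of \<Union>\<V> \<subseteq> Some -` U))"
  unfolding one_point_extension_def topology_inverse'[OF istopology_one_point_extension] ..

lemma topspace_one_point_extension:
  "topspace (one_point_extension X \<U>) = insert None (Some ` topspace X)"
proof (rule subset_antisym)
  have "Some -` insert None (Some ` topspace X) = topspace X"
    by auto
  then have "openin (one_point_extension X \<U>) (insert None (Some ` topspace X))"
    unfolding openin_one_point_extension by (auto intro: exI[of _ "{}"])
  then show "insert None (Some ` topspace X) \<subseteq> topspace (one_point_extension X \<U>)"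
    by (rule openin_subset)
  have "Some -` topspace (one_point_extension X \<U>) \<subseteq> topspace X"
    using openin_topspace openin_one_point_extension openin_subset by metis
  then show "topspace (one_point_extension X \<U>) \<subseteq> insert None (Some ` topspace X)"
    by (auto intro: option.exhaust)
qed

lemma openin_one_point_extension_Some_image:
  assumes "openin X U"
  shows "openin (one_point_extension X \<U>) (Some ` U)"
  using assms by (simp add: openin_one_point_extension inj_vimage_image_eq)

lemma embedding_map_Some_one_point_extension:
  "embedding_map X (one_point_extension X \<U>) Some"
proof (rule injective_open_imp_embedding_map)
  show "continuous_map X (one_point_extension X \<U>) Some"
    unfolding continuous_map_def
  proof (intro conjI allI impI)
    show "Some \<in> topspace X \<rightarrow> topspace (one_point_extension X \<U>)"
      by (auto simp: topspace_one_point_extension)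
    fix U assume "openin (one_point_extension X \<U>) U"
    then have "openin X (Some -` U)"
      by (simp add: openin_one_point_extension)
    moreover have "{x \<in> topspace X. Some x \<in> U} = Some -` U"
      using openin_subset[OF calculation] by blast
    ultimately show "openin X {x \<in> topspace X. Some x \<in> U}"
      by simp
  qed
  show "open_map X (one_point_extension X \<U>) Some"
    by (simp add: open_map_def openin_one_point_extension_Some_image)
qed simp

lemma Hausdorff_space_one_point_extension:
  assumes X: "Hausdorff_space X"
    and \<U>: "\<And>U. U \<in> \<U> \<Longrightarrow> openin X U" "topspace X \<subseteq> \<Union>\<U>"
  shows "Hausdorff_space (one_point_extension X \<U>)"
proof -
  let ?Y = "one_point_extension X \<U>"
  have separate_None: "\<exists>U V. openin ?Y U \<and> openin ?Y V \<and> Some a \<in> U \<and> None \<in> V \<and> disjnt U V"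
    if a: "a \<in> topspace X" for a
  proof -
    obtain U where U: "U \<in> \<U>" "a \<in> U"
      using a \<U>(2) by blast
    define W where "W = insert None (Some ` (topspace X - X closure_of U))"
    have W_pre: "Some -` W = topspace X - X closure_of \<Union>{U}"
      by (auto simp: W_def)
    have "openin ?Y W"
      unfolding openin_one_point_extension W_pre using U(1)
      by (intro conjI impI exI[of _ "{U}"]) (auto simp: openin_diff)
    moreover have "disjnt (Some ` U) W"
      using closure_of_subset[OF openin_subset[OF \<U>(1)[OF U(1)]]] by (auto simp: W_def disjnt_def)
    moreover have "openin ?Y (Some ` U)"
      by (rule openin_one_point_extension_Some_image[OF \<U>(1)[OF U(1)]])
    moreover have "Some a \<in> Some ` U" "None \<in> W"
      using U(2) by (auto simp: W_def)
    ultimately show ?thesis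
      by blast
  qed
  show ?thesis
    unfolding Hausdorff_space_def
  proof (intro allI impI, elim conjE)
    fix x y assume xy: "x \<in> topspace ?Y" "y \<in> topspace ?Y" "x \<noteq> y"
    show "\<exists>U V. openin ?Y U \<and> openin ?Y V \<and> x \<in> U \<and> y \<in> V \<and> disjnt U V"
    proof (cases x; cases y)
      fix a b assume ab: "x = Some a" "y = Some b"
      with xy have "a \<in> topspace X" "b \<in> topspace X" "a \<noteq> b"
        by (auto simp: topspace_one_point_extension)
      then obtain U V where UV: "openin X U" "openin X V" "a \<in> U" "b \<in> V" "disjnt U V"
        using X[unfolded Hausdorff_space_def, rule_format, of a b] by blast
      have "disjnt (Some ` U) (Some ` V)"
        using UV(5) by (auto simp: disjnt_def)
      moreover have "openin ?Y (Some ` U)" "openin ?Y (Some ` V)"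
        using UV(1,2) by (simp_all add: openin_one_point_extension_Some_image)
      ultimately show ?thesis
        using ab UV(3,4) by blast
    next
      fix a assume "x = Some a" "y = None"
      with xy show ?thesis
        using separate_None by (auto simp: topspace_one_point_extension)
    next
      fix b assume "x = None" "y = Some b"
      with xy have "b \<in> topspace X"
        by (auto simp: topspace_one_point_extension)
      with \<open>x = None\<close> \<open>y = Some b\<close> show ?thesis
        using separate_None by (metis disjnt_sym)
    qed (use xy in simp)
  qed
qed

lemma one_point_extension_neighbourhood_None_meets:
  assumes T: "openin (one_point_extension X \<U>) T" "None \<in> T"
    and C: "C \<subseteq> topspace X" "\<And>\<V>. finite \<V> \<Longrightarrow> \<V> \<subseteq> \<U> \<Longrightarrow> \<not> C \<subseteq> X closure_of \<Union>\<V>"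
  shows "\<exists>x\<in>C. Some x \<in> T"
proof -
  obtain \<V> where \<V>: "finite \<V>" "\<V> \<subseteq> \<U>" "topspace X - X closure_of \<Union>\<V> \<subseteq> Some -` T"
    using T unfolding openin_one_point_extension by blast
  then obtain x where "x \<in> C" "x \<notin> X closure_of \<Union>\<V>"
    using C(2) by blast
  with C(1) \<V>(3) show ?thesis
    by blast
qed

lemma connected_space_one_point_extension:
  assumes \<U>: "\<And>C \<V>. C \<in> connected_components_of X \<Longrightarrow> finite \<V> \<Longrightarrow> \<V> \<subseteq> \<U> \<Longrightarrow>
      \<not> C \<subseteq> X closure_of \<Union>\<V>"
  shows "connected_space (one_point_extension X \<U>)"
proof -
  let ?Y = "one_point_extension X \<U>"
  have clopen_empty: "B = {}" if B: "openin ?Y B" "closedin ?Y B" "None \<notin> B" for B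
  proof (rule ccontr)
    assume "B \<noteq> {}"
    then obtain x where x: "Some x \<in> B"
      using B(3) by (metis not_None_eq subsetI subset_empty)
    define A where "A = topspace ?Y - B"
    have A: "openin ?Y A" "None \<in> A"
      using B(2,3) by (auto simp: A_def closedin_def topspace_one_point_extension)
    have B_pre_open: "openin X (Some -` B)"
      using B(1) by (simp add: openin_one_point_extension)
    have "Some -` A = topspace X - Some -` B"
      by (auto simp: A_def topspace_one_point_extension)
    then have B_pre_closed: "closedin X (Some -` B)"
      using A(1) openin_subset[OF B_pre_open] by (simp add: openin_one_point_extension closedin_def)
    have x_X: "x \<in> topspace X"
      using openin_subset[OF B_pre_open] x by blast
    define C where "C = connected_component_of_set X x"
    have C: "C \<in> connected_components_of X" "C \<subseteq> topspace X"
      using x_X connected_component_of_subset_topspace[of X x]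
      by (auto simp: C_def connected_components_of_def)
    have "x \<in> C"
      using x_X by (simp add: C_def connected_component_of_refl)
    then have "C \<subseteq> Some -` B"
      using connectedin_clopen_cases[OF connectedin_connected_component_of B_pre_closed B_pre_open] x
      unfolding C_def disjnt_iff by blast
    moreover obtain z where "z \<in> C" "Some z \<in> A"
      using one_point_extension_neighbourhood_None_meets[OF A C(2) \<U>[OF C(1)]] by blast
    ultimately show False
      by (auto simp: A_def)
  qed
  show ?thesis
    unfolding connected_space_clopen_in
  proof (intro allI impI, elim conjE)
    fix T assume T: "openin ?Y T" "closedin ?Y T"
    show "T = {} \<or> T = topspace ?Y"
    proof (cases "None \<in> T")
      case True
      have "topspace ?Y - T = {}"
        using T True by (intro clopen_empty) (auto simp: openin_diff closedin_diff)
      then show ?thesis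
        using openin_subset[OF T(1)] by blast
    qed (use clopen_empty T in blast)
  qed
qed

lemma one_point_connectification_one_point_extension:
  assumes X: "topspace X \<noteq> {}"
    and \<U>: "\<And>C \<V>. C \<in> connected_components_of X \<Longrightarrow> finite \<V> \<Longrightarrow> \<V> \<subseteq> \<U> \<Longrightarrow>
      \<not> C \<subseteq> X closure_of \<Union>\<V>"
  shows "one_point_connectification X (one_point_extension X \<U>) Some"
proof -
  let ?Y = "one_point_extension X \<U>"
  obtain C where C: "C \<in> connected_components_of X"
    using X by (metis Union_connected_components_of ex_in_conv Union_empty)
  have "None \<in> ?Y closure_of (Some ` topspace X)"
    unfolding in_closure_of
  proof (intro conjI allI impI; (elim conjE)?)
    show "None \<in> topspace ?Y"
      by (simp add: topspace_one_point_extension)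
    fix T assume "None \<in> T" "openin ?Y T"
    then obtain x where "x \<in> C" "Some x \<in> T"
      using one_point_extension_neighbourhood_None_meets connected_components_of_subset[OF C] \<U>[OF C]
      by metis
    then show "\<exists>y. y \<in> Some ` topspace X \<and> y \<in> T"
      using connected_components_of_subset[OF C] by blast
  qed
  then have "?Y closure_of (Some ` topspace X) = topspace ?Y"
    using closure_of_subset[of "Some ` topspace X" ?Y] closure_of_subset_topspace[of ?Y]
    by (auto simp: topspace_one_point_extension)
  then show ?thesis
    unfolding one_point_connectification_def
    using connected_space_one_point_extension[OF \<U>] embedding_map_Some_one_point_extension
    by (auto simp: topspace_one_point_extension)
qed

lemma not_almost_compact_open_subspace_cover:
  assumes C: "openin X C" and not_ac: "\<not> almost_compact_space (subtopology X C)"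
  shows "\<exists>\<U>. (\<forall>U\<in>\<U>. openin X U \<and> U \<subseteq> C) \<and> C \<subseteq> \<Union>\<U> \<and>
    (\<forall>\<V>. finite \<V> \<and> \<V> \<subseteq> \<U> \<longrightarrow> \<not> C \<subseteq> X closure_of \<Union>\<V>)"
proof -
  have top_C: "topspace (subtopology X C) = C"
    using openin_subset[OF C] by (rule topspace_subtopology_subset)
  obtain \<U> where \<U>: "\<forall>U\<in>\<U>. openin (subtopology X C) U" "C \<subseteq> \<Union>\<U>"
    and not_dense: "\<not> (\<exists>\<V>. finite \<V> \<and> \<V> \<subseteq> \<U> \<and> subtopology X C closure_of \<Union>\<V> = C)"
    using not_ac unfolding almost_compact_space_def top_C not_all not_imp by (elim exE conjE)
  show ?thesis
  proof (intro exI[of _ \<U>] conjI ballI allI impI)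
    fix U assume "U \<in> \<U>"
    with \<U>(1) have U: "openin (subtopology X C) U"
      by (rule bspec)
    show "openin X U"
      by (rule openin_trans_full[OF U C])
    show "U \<subseteq> C"
      using openin_subset[OF U] by (simp only: top_C)
  next
    fix \<V> assume "finite \<V> \<and> \<V> \<subseteq> \<U>"
    then have "subtopology X C closure_of \<Union>\<V> \<noteq> C"
      using not_dense by blast
    then show "\<not> C \<subseteq> X closure_of \<Union>\<V>"
      unfolding closure_of_subtopology_open[OF disjI1, OF C] by blast
  qed (rule \<U>(2))
qed

lemma components_not_almost_compact_cover:
  assumes X: "locally_connected_space X"
    and not_ac: "\<And>C. C \<in> connected_components_of X \<Longrightarrow> \<not> almost_compact_space (subtopology X C)"
  obtains \<U> where "\<And>U. U \<in> \<U> \<Longrightarrow> openin X U" "topspace X \<subseteq> \<Union>\<U>"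
    "\<And>C \<V>. C \<in> connected_components_of X \<Longrightarrow> finite \<V> \<Longrightarrow> \<V> \<subseteq> \<U> \<Longrightarrow>
      \<not> C \<subseteq> X closure_of \<Union>\<V>"
proof -
  have "\<exists>\<U>. (\<forall>U\<in>\<U>. openin X U \<and> U \<subseteq> C) \<and> C \<subseteq> \<Union>\<U> \<and>
      (\<forall>\<V>. finite \<V> \<and> \<V> \<subseteq> \<U> \<longrightarrow> \<not> C \<subseteq> X closure_of \<Union>\<V>)"
    if C: "C \<in> connected_components_of X" for C
    using openin_connected_components_of_locally_connected_space[OF X C] not_ac[OF C]
    by (rule not_almost_compact_open_subspace_cover)
  then obtain cov where cov: "\<And>C. C \<in> connected_components_of X \<Longrightarrow>
      (\<forall>U\<in>cov C. openin X U \<and> U \<subseteq> C) \<and> C \<subseteq> \<Union>(cov C) \<and>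
      (\<forall>\<V>. finite \<V> \<and> \<V> \<subseteq> cov C \<longrightarrow> \<not> C \<subseteq> X closure_of \<Union>\<V>)"
    by metis
  define \<U> where "\<U> = \<Union>(cov ` connected_components_of X)"
  show thesis
  proof (rule that)
    fix U assume "U \<in> \<U>"
    then obtain C where "C \<in> connected_components_of X" "U \<in> cov C"
      unfolding \<U>_def by blast
    then show "openin X U"
      using cov by blast
  next
    show "topspace X \<subseteq> \<Union>\<U>"
    proof
      fix x assume "x \<in> topspace X"
      then obtain C where C: "C \<in> connected_components_of X" "x \<in> C"
        by (metis Union_connected_components_of UnionE)
      then have "x \<in> \<Union>(cov C)"
        using cov by blast
      with C(1) show "x \<in> \<Union>\<U>"
        unfolding \<U>_def by blast
    qed
  next
    fix C \<V> assume C: "C \<in> connected_components_of X" and \<V>: "finite \<V>" "\<V> \<subseteq> \<U>"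
    have "finite (\<V> \<inter> cov C)"
      using \<V>(1) by simp
    then have "\<not> C \<subseteq> X closure_of \<Union>(\<V> \<inter> cov C)"
      using cov[OF C] by blast
    then obtain x where x: "x \<in> C" "x \<notin> X closure_of \<Union>(\<V> \<inter> cov C)"
      by blast
    have "\<Union>(\<V> - cov C) \<subseteq> topspace X - C"
    proof
      fix y assume "y \<in> \<Union>(\<V> - cov C)"
      then obtain V D where V: "y \<in> V" "V \<notin> cov C" and D: "D \<in> connected_components_of X" "V \<in> cov D"
        using \<V>(2) unfolding \<U>_def by blast
      then have "disjnt D C"
        using connected_components_of_disjoint[OF D(1) C] by blast
      moreover have "V \<subseteq> D" "D \<subseteq> topspace X"
        using cov[OF D(1)] D(2) connected_components_of_subset[OF D(1)] by blast+
      ultimately show "y \<in> topspace X - C"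
        using V(1) by (auto simp: disjnt_def)
    qed
    moreover have "closedin X (topspace X - C)"
      using openin_connected_components_of_locally_connected_space[OF X C] by (simp add: closedin_diff)
    ultimately have "X closure_of \<Union>(\<V> - cov C) \<subseteq> topspace X - C"
      by (rule closure_of_minimal)
    moreover have "\<Union>\<V> = \<Union>(\<V> \<inter> cov C) \<union> \<Union>(\<V> - cov C)"
      by blast
    ultimately have "x \<notin> X closure_of \<Union>\<V>"
      using x by (auto simp: closure_of_Un)
    with x(1) show "\<not> C \<subseteq> X closure_of \<Union>\<V>"
      by blast
  qed
qed

theorem theorem2p10:
  fixes X :: "'a topology"
  assumes "topspace X \<noteq> {}"
    and "locally_connected_space X"
    and "Hausdorff_space X"
  shows "has_Hausdorff_one_point_connectification X \<longleftrightarrow>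
         (\<forall>C \<in> connected_components_of X. \<not> almost_compact_space (subtopology X C))"
proof
  assume "has_Hausdorff_one_point_connectification X"
  then obtain Y :: "'a option topology" and f
    where Y: "one_point_connectification X Y f" "Hausdorff_space Y"
    unfolding has_Hausdorff_one_point_connectification_def by blast
  show "\<forall>C \<in> connected_components_of X. \<not> almost_compact_space (subtopology X C)"
  proof
    fix C assume "C \<in> connected_components_of X"
    then show "\<not> almost_compact_space (subtopology X C)"
      by (rule one_point_connectification_component_not_almost_compact[OF assms(2) Y])
  qed
next
  assume "\<forall>C \<in> connected_components_of X. \<not> almost_compact_space (subtopology X C)"
  then have not_ac: "\<And>C. C \<in> connected_components_of X \<Longrightarrow> \<not> almost_compact_space (subtopology X C)"
    by blast
  show "has_Hausdorff_one_point_connectification X"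
  proof (rule components_not_almost_compact_cover[OF assms(2) not_ac])
    fix \<U>
    assume \<U>: "\<And>U. U \<in> \<U> \<Longrightarrow> openin X U" "topspace X \<subseteq> \<Union>\<U>"
      and not_covered: "\<And>C \<V>. C \<in> connected_components_of X \<Longrightarrow> finite \<V> \<Longrightarrow> \<V> \<subseteq> \<U> \<Longrightarrow>
        \<not> C \<subseteq> X closure_of \<Union>\<V>"
    have "one_point_connectification X (one_point_extension X \<U>) Some"
      by (rule one_point_connectification_one_point_extension[OF assms(1) not_covered])
    moreover have "Hausdorff_space (one_point_extension X \<U>)"
      by (rule Hausdorff_space_one_point_extension[OF assms(3) \<U>])
    ultimately show ?thesis
      unfolding has_Hausdorff_one_point_connectification_def by blast
  qed
qed

end
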